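(* Let $\{(N_n,B_n)\}_{n=1}^\infty$ be a sequence with $N_n>0$ and $B_n\subseteq\mathbb{R}$ finite with $\#B_n\ge 2$ for all $n\ge1$. For each $n$ let $B_{n,1}=B_n\cap\{0,1,\dots,N_n-1\}$ and $B_{n,2}=B_n\setminus B_{n,1}$. (1) If either $\sum_{n=1}^{\infty}\frac{\#B_{n,2}}{\#B_n}<\infty$, or $\sum_{n=1}^{\infty}\frac{\max\{|b|:b\in B_n\}}{N_1N_2\cdots N_n}<\infty$, then the infinite convolution $$\mu=\delta_{N_1^{-1}B_1}*\delta_{(N_2N_1)^{-1}B_2}*\cdots*\delta_{(N_n\cdots N_2N_1)^{-1}B_n}*\cdots$$ exists. (2) If there exists $r_0>0$ such that $$\sum_{n=1}^{\infty}\frac{\#\{b\in B_n:\ |b|>N_1N_2\cdots N_n r_0\}}{\#B_n}=\infty,$$ then the infinite convolution $\mu$ does not exist.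
   Context: For a finite set $A\subseteq\mathbb{R}$, $\delta_A=\frac{1}{\#A}\sum_{a\in A}\delta_a$, where $\delta_a$ is the Dirac measure at $a$; $*$ denotes convolution of measures and $cA=\{ca:a\in A\}$. Set $\mu_n=\delta_{N_1^{-1}B_1}*\delta_{(N_2N_1)^{-1}B_2}*\cdots*\delta_{(N_n\cdots N_1)^{-1}B_n}$. The infinite convolution is said to exist if $\{\mu_n\}$ converges weakly to a Borel probability measure $\mu$, which is then the infinite convolution. *)

theory Defs
  imports "HOL-Probability.Probability" "HOL-Probability.Convolution"
begin

definition delta_set :: "real set \<Rightarrow> real measure" where
  "delta_set A = distr (uniform_count_measure A) borel (\<lambda>x. x)"

definition prodN :: "(nat \<Rightarrow> nat) \<Rightarrow> nat \<Rightarrow> real" where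
  "prodN N n = (\<Prod>k\<in>{1..n}. real (N k))"

definition Bn1 :: "(nat \<Rightarrow> nat) \<Rightarrow> (nat \<Rightarrow> real set) \<Rightarrow> nat \<Rightarrow> real set" where
  "Bn1 N B n = B n \<inter> real ` {0..<N n}"

definition Bn2 :: "(nat \<Rightarrow> nat) \<Rightarrow> (nat \<Rightarrow> real set) \<Rightarrow> nat \<Rightarrow> real set" where
  "Bn2 N B n = B n - Bn1 N B n"

primrec mu_seq :: "(nat \<Rightarrow> nat) \<Rightarrow> (nat \<Rightarrow> real set) \<Rightarrow> nat \<Rightarrow> real measure" where
  "mu_seq N B 0 = return borel 0"
| "mu_seq N B (Suc n) =
     convolution (mu_seq N B n) (delta_set ((\<lambda>b. b / prodN N (Suc n)) ` B (Suc n)))"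

definition inf_conv_exists :: "(nat \<Rightarrow> nat) \<Rightarrow> (nat \<Rightarrow> real set) \<Rightarrow> bool" where
  "inf_conv_exists N B \<longleftrightarrow> (\<exists>\<mu>. real_distribution \<mu> \<and> weak_conv_m (mu_seq N B) \<mu>)"

end

(* Write D_k for the uniform distribution on (N_1 ... N_(k+1))^-1 B_(k+1), so that mu_n = D_0 * ... * D_(n-1)
   and the characteristic function of mu_n is the product of those of the D_k.

   (1) Both hypotheses give |1 - char D_k t| <= |t| c_k + e_k with summable c and e: a digit b with
   |b| <= c_k N_1 ... N_(k+1) contributes at most |t| c_k, every other digit at most 2.  Hence the
   products converge for every t and, uniformly in n, char mu_n t -> 1 as t -> 0.  Levy's tail
   inequality  mu {|x| >= r} <= r * integral over [0, 2/r] of (1 - Re char mu)  makes mu_n tight, and a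
   tight sequence with pointwise convergent characteristic functions converges weakly.

   (2) If mu_n converges weakly then |char mu_n| >= 1/2 near 0, so the sums of 1 - |char D_k|^2 stay
   bounded there and char D_k -> 1 there; the inequality 1 - Re f(2t) <= 4 (1 - Re f(t)) for
   characteristic functions spreads both facts to every bounded set of t.  Levy's inequality for D_k
   and for its symmetrisation S_k (the law of X - Y, X and Y independent with law D_k) gives
   D_k {|x| >= r/2} -> 0 and sum_k S_k {|x| >= r/2} < oo.  Once fewer than half of the scaled digits
   have modulus >= r/2, each one of modulus > r is at distance >= r/2 from half of all of them, so
   D_k {|x| > r} <= 2 S_k {|x| >= r/2}; hence the series in (2) converges for every r0 > 0. *)

theory Submission
  imports Defs
begin

section \<open>Characteristic functions and Levy's tail inequality\<close>

lemma real_distribution_convolution: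
  assumes "real_distribution M" "real_distribution N"
  shows "real_distribution (M \<star> N)"
proof -
  interpret M: real_distribution M by fact
  interpret N: real_distribution N by fact
  interpret P: pair_prob_space M N ..
  show ?thesis
    unfolding convolution_def by (rule P.real_distribution_distr) simp
qed

lemma char_convolution:
  assumes "real_distribution M" "real_distribution N"
  shows "char (M \<star> N) t = char M t * char N t"
proof -
  interpret M: real_distribution M by fact
  interpret N: real_distribution N by fact
  interpret P: pair_prob_space M N ..
  have int: "integrable (M \<Otimes>\<^sub>M N) (\<lambda>(x, y). iexp (t * x) * iexp (t * y))"
    by (rule P.integrable_const_bound[where B=1]) (auto simp: norm_mult)
  have "char (M \<star> N) t = (CLINT z | M \<Otimes>\<^sub>M N. iexp (t * (fst z + snd z)))"
    unfolding char_def convolution_def by (subst integral_distr) (auto simp: case_prod_beta)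
  also have "\<dots> = (CLINT z | M \<Otimes>\<^sub>M N. (\<lambda>(x, y). iexp (t * x) * iexp (t * y)) z)"
    by (intro Bochner_Integration.integral_cong) (auto simp: distrib_left exp_add algebra_simps)
  also have "\<dots> = (CLINT x | M. (CLINT y | N. iexp (t * x) * iexp (t * y)))"
    using P.integral_fst[OF int] by simp
  also have "\<dots> = char M t * char N t"
    unfolding char_def by simp
  finally show ?thesis .
qed

lemma real_distribution_return_0: "real_distribution (return borel (0::real))"
  unfolding real_distribution_def real_distribution_axioms_def by (auto intro!: prob_space_return)

lemma char_return_0: "char (return borel 0) t = 1"
  unfolding char_def by (simp add: integral_return)

context real_distribution
begin

lemma one_minus_Re_char: "1 - Re (char M t) = (LINT x|M. 1 - cos (t * x))"
proof -
  have "Re (char M t) = (LINT x|M. cos (t * x))"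
    unfolding char_def
    by (subst integral_Re[symmetric]) (auto intro: integrable_const_bound[where B=1] simp: Re_exp)
  then show ?thesis
    using prob_space by (simp add: integrable_const_bound[where B=1])
qed

lemma one_minus_Re_char_bounds: "0 \<le> 1 - Re (char M t)" "1 - Re (char M t) \<le> 2"
  using abs_Re_le_cmod[of "char M t"] cmod_char_le_1[of t] by auto

lemma integrable_on_one_minus_Re_char: "(\<lambda>t. 1 - Re (char M t)) integrable_on {a..b}"
  by (intro integrable_continuous_interval continuous_at_imp_continuous_on ballI
        continuous_intros isCont_char)

lemma one_minus_Re_char_double_le: "1 - Re (char M (2 * t)) \<le> 4 * (1 - Re (char M t))"
proof -
  have one_minus_cos_double_le: "1 - cos (2 * x) \<le> 4 * (1 - cos x)" for x :: real
  proof -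
    have "1 - cos (2 * x) = 2 * (1 - cos x) * (1 + cos x)"
      using cos_double_cos[of x] by (simp add: algebra_simps power2_eq_square)
    also have "\<dots> \<le> 2 * (1 - cos x) * 2"
      by (intro mult_left_mono) auto
    finally show ?thesis by simp
  qed
  have int: "integrable M (\<lambda>x. 1 - cos (s * x))" for s
    by (rule integrable_const_bound[where B=2]) auto
  have "(LINT x|M. 1 - cos (2 * t * x)) \<le> (LINT x|M. 4 * (1 - cos (t * x)))"
  proof (rule integral_mono)
    show "integrable M (\<lambda>x. 1 - cos (2 * t * x))" by (rule int)
    show "integrable M (\<lambda>x. 4 * (1 - cos (t * x)))"
      using int by (rule integrable_mult_right)
  qed (use one_minus_cos_double_le in \<open>simp add: mult.assoc\<close>)
  then show ?thesis
    unfolding one_minus_Re_char integral_mult_right_zero by simp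
qed

end

lemma doubling_iterate:
  fixes f :: "real \<Rightarrow> real"
  assumes "\<And>t. f (2 * t) \<le> 4 * f t"
  shows "f t \<le> 4 ^ m * f (t / 2 ^ m)"
proof (induction m arbitrary: t)
  case (Suc m)
  have "f t \<le> 4 * f (t / 2)" using assms[of "t / 2"] by simp
  also have "\<dots> \<le> 4 * (4 ^ m * f (t / 2 / 2 ^ m))" using Suc[of "t / 2"] by simp
  finally show ?case by (simp add: mult.assoc)
qed simp

lemma obtain_power_of_2_scaling:
  fixes d t :: real
  assumes "d > 0"
  obtains m :: nat where "\<bar>t / 2 ^ m\<bar> \<le> d"
proof -
  obtain m :: nat where "\<bar>t\<bar> / d < 2 ^ m"
    using real_arch_pow[of 2 "\<bar>t\<bar> / d"] by auto
  with assms have "\<bar>t / 2 ^ m\<bar> \<le> d"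
    by (simp add: pos_divide_less_eq divide_le_eq mult.commute)
  then show thesis by (rule that)
qed

lemma has_integral_one_minus_cos:
  fixes x u :: real
  assumes "x \<noteq> 0" "0 \<le> u"
  shows "((\<lambda>t. 1 - cos (t * x)) has_integral u - sin (u * x) / x) {0..u}"
proof -
  have "((\<lambda>t. 1 - cos (t * x)) has_integral (u - sin (u * x) / x) - (0 - sin (0 * x) / x)) {0..u}"
  proof (rule fundamental_theorem_of_calculus[where f="\<lambda>t. t - sin (t * x) / x"])
    show "0 \<le> u" by fact
    fix s assume "s \<in> {0..u}"
    have "((\<lambda>t. t - sin (t * x) / x) has_real_derivative 1 - cos (s * x) * x / x) (at s within {0..u})"
      by (auto intro!: derivative_eq_intros)
    then show "((\<lambda>t. t - sin (t * x) / x) has_vector_derivative 1 - cos (s * x)) (at s within {0..u})"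
      using \<open>x \<noteq> 0\<close> by (simp add: has_real_derivative_iff_has_vector_derivative)
  qed
  then show ?thesis by simp
qed

lemma inverse_le_integral_one_minus_cos:
  fixes r x :: real
  assumes "r > 0" "r \<le> \<bar>x\<bar>"
  shows "1 / r \<le> integral {0..2 / r} (\<lambda>t. 1 - cos (t * x))"
proof -
  have "x \<noteq> 0" using assms by auto
  have "sin (2 / r * x) / x \<le> \<bar>sin (2 / r * x)\<bar> / \<bar>x\<bar>"
    by (metis abs_divide abs_ge_self)
  also have "\<dots> \<le> 1 / \<bar>x\<bar>"
    by (simp add: divide_right_mono)
  also have "\<dots> \<le> 1 / r"
    using assms by (simp add: frac_le)
  finally show ?thesis
    using integral_unique[OF has_integral_one_minus_cos[OF \<open>x \<noteq> 0\<close>, of "2 / r"]] \<open>r > 0\<close> by simp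
qed

lemma integral_Icc_eq_lborel_integral:
  fixes f :: "real \<Rightarrow> real"
  assumes "continuous_on {a..b} f"
  shows "integral {a..b} f = (LBINT t. indicator {a..b} t * f t)"
  using set_borel_integral_eq_integral(2)[of "{a..b}" f] borel_integrable_compact[OF compact_Icc assms]
  by (simp add: set_integrable_def set_lebesgue_integral_def)

lemma (in real_distribution) integral_one_minus_Re_char:
  shows "integrable M (\<lambda>x. integral {0..u} (\<lambda>t. 1 - cos (t * x)))"
    and "integral {0..u} (\<lambda>t. 1 - Re (char M t)) = (LINT x|M. integral {0..u} (\<lambda>t. 1 - cos (t * x)))"
proof -
  interpret P: pair_sigma_finite M lborel ..
  define f where "f x t = indicator {0..u} t *\<^sub>R (1 - cos (t * x))" for x t :: real
  have "set_integrable (M \<Otimes>\<^sub>M lborel) (UNIV \<times> {0..u}) (\<lambda>(x, t). 1 - cos (t * x))"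
    unfolding set_integrable_def
    by (intro integrableI_bounded_set_indicator[where B=2])
       (auto simp: lborel.emeasure_pair_measure_Times ennreal_mult_less_top emeasure_lborel_Icc_eq
          emeasure_space_1[unfolded space_eq_univ])
  then have int_f: "integrable (M \<Otimes>\<^sub>M lborel) (\<lambda>(x, t). f x t)"
    by (simp add: f_def set_integrable_def indicator_times split_beta')
  have inner: "(LINT t|lborel. f x t) = integral {0..u} (\<lambda>t. 1 - cos (t * x))" for x
    unfolding f_def by (simp add: integral_Icc_eq_lborel_integral continuous_intros)
  show "integrable M (\<lambda>x. integral {0..u} (\<lambda>t. 1 - cos (t * x)))"
    using P.integrable_fst'[OF int_f] by (simp add: inner)
  have "integral {0..u} (\<lambda>t. 1 - Re (char M t))
      = (LINT t|lborel. indicator {0..u} t * (1 - Re (char M t)))"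
    by (intro integral_Icc_eq_lborel_integral continuous_at_imp_continuous_on ballI
          continuous_intros isCont_char)
  also have "\<dots> = (LINT t|lborel. LINT x|M. f x t)"
    by (simp add: f_def one_minus_Re_char)
  also have "\<dots> = (LINT x|M. integral {0..u} (\<lambda>t. 1 - cos (t * x)))"
    using P.Fubini_integral[OF int_f] by (simp add: inner)
  finally show "integral {0..u} (\<lambda>t. 1 - Re (char M t)) = (LINT x|M. integral {0..u} (\<lambda>t. 1 - cos (t * x)))" .
qed

lemma levy_tail_bound:
  assumes "real_distribution M" "r > 0"
  shows "measure M {x. r \<le> \<bar>x\<bar>} \<le> r * integral {0..2 / r} (\<lambda>t. 1 - Re (char M t))"
proof -
  interpret M: real_distribution M by fact
  define w where "w x = integral {0..2 / r} (\<lambda>t. 1 - cos (t * x))" for x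
  have w_ge: "indicator {x. r \<le> \<bar>x\<bar>} x * (1 / r) \<le> w x" for x
  proof -
    have "0 \<le> w x"
      unfolding w_def by (intro integral_nonneg integrable_continuous_interval continuous_intros) simp
    with inverse_le_integral_one_minus_cos[OF \<open>r > 0\<close>, of x] show ?thesis
      by (auto simp: w_def split: split_indicator)
  qed
  have "measure M {x. r \<le> \<bar>x\<bar>} * (1 / r) = (LINT x|M. indicator {x. r \<le> \<bar>x\<bar>} x * (1 / r))"
    by simp
  also have "\<dots> \<le> (LINT x|M. w x)"
  proof (rule integral_mono)
    show "integrable M (\<lambda>x. indicator {x. r \<le> \<bar>x\<bar>} x * (1 / r))"
      by (intro integrable_mult_left integrable_real_indicator)
         (auto simp: M.emeasure_finite less_top[symmetric])
  qed (use M.integral_one_minus_Re_char(1) w_ge in \<open>auto simp: w_def\<close>)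
  also have "\<dots> = integral {0..2 / r} (\<lambda>t. 1 - Re (char M t))"
    unfolding w_def by (rule M.integral_one_minus_Re_char(2)[symmetric])
  finally show ?thesis
    using \<open>r > 0\<close> by (simp add: field_simps)
qed

section \<open>Weak convergence of partial convolutions\<close>

lemma tight_if_char_equicontinuous:
  assumes M: "\<And>n. real_distribution (M n)"
    and equicont: "\<And>\<epsilon>. \<epsilon> > 0 \<Longrightarrow> \<exists>u>0. \<forall>n t. \<bar>t\<bar> \<le> u \<longrightarrow> cmod (1 - char (M n) t) \<le> \<epsilon>"
  shows "tight M"
  unfolding tight_def
proof (intro conjI allI impI M)
  fix \<epsilon> :: real assume "\<epsilon> > 0"
  then obtain u where "u > 0" and u: "\<And>n t. \<bar>t\<bar> \<le> u \<Longrightarrow> cmod (1 - char (M n) t) \<le> \<epsilon> / 4"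
    using equicont[of "\<epsilon> / 4"] by auto
  define r where "r = 2 / u"
  have "r > 0" "2 / r = u" using \<open>u > 0\<close> by (auto simp: r_def)
  show "\<exists>a b. a < b \<and> (\<forall>n. 1 - \<epsilon> < measure (M n) {a<..b})"
  proof (intro exI conjI allI)
    show "- r < r" using \<open>r > 0\<close> by simp
    fix n
    interpret Mn: real_distribution "M n" by (rule M)
    have "measure (M n) {x. r \<le> \<bar>x\<bar>} \<le> r * integral {0..u} (\<lambda>t. 1 - Re (char (M n) t))"
      using levy_tail_bound[OF M \<open>r > 0\<close>] \<open>2 / r = u\<close> by simp
    also have "\<dots> \<le> r * integral {0..u} (\<lambda>t. \<epsilon> / 4)"
    proof (intro mult_left_mono integral_le Mn.integrable_on_one_minus_Re_char)
      fix t assume "t \<in> {0..u}"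
      then show "1 - Re (char (M n) t) \<le> \<epsilon> / 4"
        using u[of t n] complex_Re_le_cmod[of "1 - char (M n) t"] by simp
    qed (use \<open>r > 0\<close> in \<open>simp_all add: integrable_const_ivl\<close>)
    also have "\<dots> = \<epsilon> / 2" using \<open>u > 0\<close> by (simp add: r_def)
    finally have tail: "measure (M n) {x. r \<le> \<bar>x\<bar>} \<le> \<epsilon> / 2" .
    have "1 - measure (M n) {x. r \<le> \<bar>x\<bar>} = measure (M n) (UNIV - {x. r \<le> \<bar>x\<bar>})"
      using Mn.prob_compl[of "{x. r \<le> \<bar>x\<bar>}"] by simp
    also have "\<dots> \<le> measure (M n) {- r<..r}"
      by (intro Mn.finite_measure_mono) auto
    finally show "1 - \<epsilon> < measure (M n) {- r<..r}"
      using tail \<open>\<epsilon> > 0\<close> by linarith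
  qed
qed

lemma weak_conv_if_tight_char_convergent:
  assumes M: "\<And>n. real_distribution (M n)" and "tight M"
    and char_conv: "\<And>t. convergent (\<lambda>n. char (M n) t)"
  shows "\<exists>\<nu>. real_distribution \<nu> \<and> weak_conv_m M \<nu>"
proof -
  define L where "L t = lim (\<lambda>n. char (M n) t)" for t
  have L: "(\<lambda>n. char (M n) t) \<longlonglongrightarrow> L t" for t
    using char_conv by (simp add: L_def convergent_LIMSEQ_iff)
  have char_limit_point: "char \<nu> = L"
    if "strict_mono s" "real_distribution \<nu>" "weak_conv_m (M \<circ> s) \<nu>" for s \<nu>
  proof
    fix t
    have "(\<lambda>n. char ((M \<circ> s) n) t) \<longlonglongrightarrow> char \<nu> t"
      by (rule levy_continuity1) (use that M in \<open>auto simp: comp_def\<close>)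
    moreover have "(\<lambda>n. char ((M \<circ> s) n) t) \<longlonglongrightarrow> L t"
      using LIMSEQ_subseq_LIMSEQ[OF L[of t] that(1)] by (simp add: comp_def)
    ultimately show "char \<nu> t = L t" by (rule LIMSEQ_unique)
  qed
  obtain s \<nu> where \<nu>: "strict_mono s" "real_distribution \<nu>" "weak_conv_m (M \<circ> id \<circ> s) \<nu>"
    using tight_imp_convergent_subsubsequence[OF \<open>tight M\<close>, of id] by (auto simp: strict_mono_def)
  have "weak_conv_m M \<nu>"
  proof (rule tight_subseq_weak_converge[OF M \<nu>(2) \<open>tight M\<close>])
    fix s' \<nu>' assume \<nu>': "strict_mono s'" "real_distribution \<nu>'" "weak_conv_m (M \<circ> s') \<nu>'"
    have "\<nu>' = \<nu>"
      using Levy_uniqueness[OF \<nu>'(2) \<nu>(2)] char_limit_point[OF \<nu>'] char_limit_point[of s \<nu>] \<nu>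
      by simp
    with \<nu>' show "weak_conv_m (M \<circ> s') \<nu>" by simp
  qed
  with \<nu>(2) show ?thesis by blast
qed

lemma sum_le_minus_ln_if_prod_one_minus_ge:
  fixes a :: "'a \<Rightarrow> real"
  assumes "finite A" "\<And>k. k \<in> A \<Longrightarrow> a k \<le> 1" "0 < c" "c \<le> (\<Prod>k\<in>A. 1 - a k)"
  shows "(\<Sum>k\<in>A. a k) \<le> - ln c"
proof -
  have "c \<le> (\<Prod>k\<in>A. exp (- a k))"
  proof (rule order_trans[OF assms(4) prod_mono])
    show "0 \<le> 1 - a k \<and> 1 - a k \<le> exp (- a k)" if "k \<in> A" for k
      using assms(2)[OF that] exp_ge_add_one_self[of "- a k"] by simp
  qed
  also have "\<dots> = exp (- (\<Sum>k\<in>A. a k))"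
    using \<open>finite A\<close> by (simp add: exp_sum sum_negf[symmetric])
  finally have "ln c \<le> ln (exp (- (\<Sum>k\<in>A. a k)))"
    using \<open>0 < c\<close> by (subst ln_le_cancel_iff) auto
  then show ?thesis by simp
qed

locale partial_convolutions =
  fixes D :: "nat \<Rightarrow> real measure" and \<mu> :: "nat \<Rightarrow> real measure"
  assumes real_distribution_D: "real_distribution (D k)"
    and \<mu>_0: "\<mu> 0 = return borel 0"
    and \<mu>_Suc: "\<mu> (Suc n) = convolution (\<mu> n) (D n)"
begin

lemma real_distribution_\<mu>: "real_distribution (\<mu> n)"
  by (induction n)
     (simp_all add: \<mu>_0 \<mu>_Suc real_distribution_return_0 real_distribution_convolution real_distribution_D)

lemma norm_char_D_le_1: "cmod (char (D k) t) \<le> 1"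
  using real_distribution.cmod_char_le_1[OF real_distribution_D] .

lemma char_\<mu>_Suc: "char (\<mu> (Suc n)) t = char (\<mu> n) t * char (D n) t"
  by (simp add: \<mu>_Suc char_convolution real_distribution_\<mu> real_distribution_D)

lemma char_\<mu>: "char (\<mu> n) t = (\<Prod>k<n. char (D k) t)"
  by (induction n) (simp_all add: \<mu>_0 char_return_0 char_\<mu>_Suc)

lemma norm_char_\<mu>_decreasing: "cmod (char (\<mu> (Suc n)) t) \<le> cmod (char (\<mu> n) t)"
  unfolding char_\<mu>_Suc norm_mult by (intro mult_left_le norm_char_D_le_1 norm_ge_zero)

lemma norm_one_minus_char_\<mu>_le: "cmod (1 - char (\<mu> n) t) \<le> (\<Sum>k<n. cmod (1 - char (D k) t))"
proof (induction n)
  case 0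
  then show ?case by (simp add: \<mu>_0 char_return_0)
next
  case (Suc n)
  have "1 - char (\<mu> (Suc n)) t = (1 - char (\<mu> n) t) + char (\<mu> n) t * (1 - char (D n) t)"
    by (simp add: char_\<mu>_Suc algebra_simps)
  also have "cmod \<dots> \<le> cmod (1 - char (\<mu> n) t) + cmod (char (\<mu> n) t) * cmod (1 - char (D n) t)"
    by (metis norm_triangle_ineq norm_mult)
  also have "\<dots> \<le> cmod (1 - char (\<mu> n) t) + cmod (1 - char (D n) t)"
    using real_distribution.cmod_char_le_1[OF real_distribution_\<mu>]
    by (simp add: mult_left_le_one_le)
  finally show ?case using Suc by simp
qed

context
  fixes c e :: "nat \<Rightarrow> real"
  assumes summable: "summable c" "summable e" and nonneg: "\<And>k. 0 \<le> c k" "\<And>k. 0 \<le> e k"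
    and deviation: "\<And>k t. cmod (1 - char (D k) t) \<le> \<bar>t\<bar> * c k + e k"
begin

lemma summable_char_deviation: "summable (\<lambda>k. cmod (1 - char (D k) t))"
  by (rule summable_comparison_test'[of "\<lambda>k. \<bar>t\<bar> * c k + e k"])
     (use summable deviation in \<open>auto intro: summable_add summable_mult\<close>)

lemma suminf_char_deviation_tendsto_0:
  "((\<lambda>t. \<Sum>k. cmod (1 - char (D k) t)) \<longlongrightarrow> 0) (nhds 0)"
proof -
  have "((\<lambda>t. \<Sum>k. cmod (1 - char (D k) t)) \<longlongrightarrow> (\<Sum>k. 0)) (at 0)"
  proof (rule tannerys_theorem[THEN conjunct2, THEN conjunct2])
    show "((\<lambda>t. cmod (1 - char (D k) t)) \<longlongrightarrow> 0) (at 0)" for k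
      using real_distribution.isCont_char[OF real_distribution_D[of k], of 0]
            real_distribution.char_zero[OF real_distribution_D[of k]]
      by (auto simp: isCont_def intro!: tendsto_eq_intros)
    have "\<forall>\<^sub>F t in at (0::real). \<bar>t\<bar> < 1"
      using order_tendstoD(2)[OF tendsto_rabs[OF tendsto_ident_at[of 0 UNIV]], of 1] by simp
    moreover have "cmod (1 - char (D k) t) \<le> c k + e k" if "\<bar>t\<bar> < 1" for k t
      using deviation[of k t] mult_left_le_one_le[OF nonneg(1)[of k], of "\<bar>t\<bar>"] that by simp
    ultimately show "\<forall>\<^sub>F (k, t) in at_top \<times>\<^sub>F at 0. norm (cmod (1 - char (D k) t)) \<le> c k + e k"
      unfolding eventually_prod_filter by (intro exI[of _ "\<lambda>_. True"] exI[of _ "\<lambda>t. \<bar>t\<bar> < 1"]) auto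
  qed (use summable in \<open>auto intro: summable_add\<close>)
  then show ?thesis
    using tendsto_at_iff_tendsto_nhds[of "\<lambda>t. \<Sum>k. cmod (1 - char (D k) t)" 0]
    by (simp add: real_distribution.char_zero[OF real_distribution_D])
qed

theorem weak_conv_if_char_deviation_summable: "\<exists>\<nu>. real_distribution \<nu> \<and> weak_conv_m \<mu> \<nu>"
proof (rule weak_conv_if_tight_char_convergent[OF real_distribution_\<mu>])
  show "convergent (\<lambda>n. char (\<mu> n) t)" for t
  proof -
    have "convergent_prod (\<lambda>k. char (D k) t)"
      using summable_char_deviation[of t]
      by (intro abs_convergent_prod_imp_convergent_prod summable_imp_abs_convergent_prod)
         (simp add: norm_minus_commute)
    then show ?thesis
      unfolding char_\<mu> using convergent_prod_LIMSEQ LIMSEQ_lessThan_iff_atMost convergentI by blast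
  qed
  show "tight \<mu>"
  proof (rule tight_if_char_equicontinuous[OF real_distribution_\<mu>])
    fix \<epsilon> :: real assume "\<epsilon> > 0"
    then obtain d where "d > 0" and d: "\<And>t. \<bar>t\<bar> < d \<Longrightarrow> (\<Sum>k. cmod (1 - char (D k) t)) < \<epsilon>"
      using order_tendstoD(2)[OF suminf_char_deviation_tendsto_0 \<open>\<epsilon> > 0\<close>]
      unfolding eventually_nhds_metric dist_real_def by auto
    have "cmod (1 - char (\<mu> n) t) \<le> \<epsilon>" if "\<bar>t\<bar> \<le> d / 2" for n t
    proof -
      have "cmod (1 - char (\<mu> n) t) \<le> (\<Sum>k. cmod (1 - char (D k) t))"
        by (rule order_trans[OF norm_one_minus_char_\<mu>_le sum_le_suminf[OF summable_char_deviation]])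
           simp_all
      with d[of t] that \<open>d > 0\<close> show ?thesis by simp
    qed
    with \<open>d > 0\<close> show "\<exists>u>0. \<forall>n t. \<bar>t\<bar> \<le> u \<longrightarrow> cmod (1 - char (\<mu> n) t) \<le> \<epsilon>"
      by (intro exI[of _ "d / 2"]) auto
  qed
qed

end

context
  fixes \<nu> assumes \<nu>: "real_distribution \<nu>" "weak_conv_m \<mu> \<nu>"
begin

lemma char_\<mu>_tendsto: "(\<lambda>n. char (\<mu> n) t) \<longlonglongrightarrow> char \<nu> t"
  by (rule levy_continuity1[OF real_distribution_\<mu> \<nu>])

lemma char_\<mu>_bounded_below:
  obtains d where "d > 0" "\<And>n t. \<bar>t\<bar> \<le> d \<Longrightarrow> 1 / 2 \<le> cmod (char (\<mu> n) t)"
proof -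
  have "(char \<nu> \<longlongrightarrow> char \<nu> 0) (nhds 0)"
    using real_distribution.isCont_char[OF \<nu>(1), of 0] by (simp add: isCont_def tendsto_at_iff_tendsto_nhds)
  then have "((\<lambda>t. cmod (char \<nu> t)) \<longlongrightarrow> 1) (nhds 0)"
    using tendsto_norm by (fastforce simp: real_distribution.char_zero[OF \<nu>(1)])
  then have "\<forall>\<^sub>F t in nhds 0. 1 / 2 < cmod (char \<nu> t)"
    by (rule order_tendstoD) simp
  then obtain \<delta> where "\<delta> > 0" and \<delta>: "\<And>t. \<bar>t\<bar> < \<delta> \<Longrightarrow> 1 / 2 < cmod (char \<nu> t)"
    unfolding eventually_nhds_metric dist_real_def by auto
  have "1 / 2 \<le> cmod (char (\<mu> n) t)" if "\<bar>t\<bar> \<le> \<delta> / 2" for n t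
  proof -
    have "decseq (\<lambda>n. cmod (char (\<mu> n) t))"
      by (rule decseq_SucI) (rule norm_char_\<mu>_decreasing)
    then have "cmod (char \<nu> t) \<le> cmod (char (\<mu> n) t)"
      by (rule decseq_ge) (rule tendsto_norm[OF char_\<mu>_tendsto])
    with \<delta>[of t] that \<open>\<delta> > 0\<close> show ?thesis by simp
  qed
  with \<open>\<delta> > 0\<close> show thesis by (intro that[of "\<delta> / 2"]) auto
qed

lemma sum_one_minus_norm_char_D_bounded_near_0:
  obtains d where "d > 0" "\<And>n t. \<bar>t\<bar> \<le> d \<Longrightarrow> (\<Sum>k<n. 1 - cmod (char (D k) t) ^ 2) \<le> ln 4"
proof -
  obtain d where "d > 0" and d: "\<And>n t. \<bar>t\<bar> \<le> d \<Longrightarrow> 1 / 2 \<le> cmod (char (\<mu> n) t)"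
    using char_\<mu>_bounded_below by blast
  have "(\<Sum>k<n. 1 - cmod (char (D k) t) ^ 2) \<le> ln 4" if "\<bar>t\<bar> \<le> d" for n t
  proof -
    have "1 / 4 \<le> cmod (char (\<mu> n) t) ^ 2"
      using power_mono[OF d[OF that, of n], of 2] by (simp add: power_divide)
    also have "\<dots> = (\<Prod>k<n. 1 - (1 - cmod (char (D k) t) ^ 2))"
      by (simp add: char_\<mu> prod_norm[symmetric] prod_power_distrib)
    finally have "(\<Sum>k<n. 1 - cmod (char (D k) t) ^ 2) \<le> - ln (1 / 4)"
      by (intro sum_le_minus_ln_if_prod_one_minus_ge) simp_all
    then show ?thesis by (simp add: ln_div)
  qed
  with \<open>d > 0\<close> show thesis by (rule that)
qed

context
  fixes S :: "nat \<Rightarrow> real measure"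
  assumes real_distribution_S: "\<And>k. real_distribution (S k)"
    and char_S: "\<And>k t. char (S k) t = of_real (cmod (char (D k) t) ^ 2)"
begin

lemma sum_one_minus_Re_char_S_bounded:
  obtains C where "\<And>n t. \<bar>t\<bar> \<le> R \<Longrightarrow> (\<Sum>k<n. 1 - Re (char (S k) t)) \<le> C"
proof -
  obtain d where "d > 0" and d: "\<And>n t. \<bar>t\<bar> \<le> d \<Longrightarrow> (\<Sum>k<n. 1 - Re (char (S k) t)) \<le> ln 4"
    using sum_one_minus_norm_char_D_bounded_near_0 by (auto simp: char_S)
  obtain m :: nat where m: "\<bar>R / 2 ^ m\<bar> \<le> d"
    using obtain_power_of_2_scaling[OF \<open>d > 0\<close>] .
  have "(\<Sum>k<n. 1 - Re (char (S k) t)) \<le> 4 ^ m * ln 4" if "\<bar>t\<bar> \<le> R" for n t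
  proof -
    have double: "(\<Sum>k<n. 1 - Re (char (S k) (2 * s))) \<le> 4 * (\<Sum>k<n. 1 - Re (char (S k) s))" for s
      unfolding sum_distrib_left
      by (intro sum_mono real_distribution.one_minus_Re_char_double_le[OF real_distribution_S])
    have "\<bar>t\<bar> / 2 ^ m \<le> \<bar>R\<bar> / 2 ^ m"
      using that by (intro divide_right_mono) auto
    with m have "\<bar>t / 2 ^ m\<bar> \<le> d"
      by (simp add: abs_divide)
    have "(\<Sum>k<n. 1 - Re (char (S k) t)) \<le> 4 ^ m * (\<Sum>k<n. 1 - Re (char (S k) (t / 2 ^ m)))"
      by (rule doubling_iterate[where f="\<lambda>t. \<Sum>k<n. 1 - Re (char (S k) t)", OF double])
    also have "\<dots> \<le> 4 ^ m * ln 4"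
      using \<open>\<bar>t / 2 ^ m\<bar> \<le> d\<close> by (intro mult_left_mono d) simp_all
    finally show ?thesis .
  qed
  then show thesis by (rule that)
qed

theorem summable_tail_symmetrisation:
  assumes "r > 0"
  shows "summable (\<lambda>k. measure (S k) {x. r \<le> \<bar>x\<bar>})"
proof -
  obtain C where C: "\<And>n t. \<bar>t\<bar> \<le> 2 / r \<Longrightarrow> (\<Sum>k<n. 1 - Re (char (S k) t)) \<le> C"
    using sum_one_minus_Re_char_S_bounded by blast
  have int: "(\<lambda>t. 1 - Re (char (S k) t)) integrable_on {0..2 / r}" for k
    by (rule real_distribution.integrable_on_one_minus_Re_char[OF real_distribution_S])
  have "(\<Sum>k<n. measure (S k) {x. r \<le> \<bar>x\<bar>}) \<le> 2 * C" for n
  proof -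
    have "(\<Sum>k<n. measure (S k) {x. r \<le> \<bar>x\<bar>})
        \<le> (\<Sum>k<n. r * integral {0..2 / r} (\<lambda>t. 1 - Re (char (S k) t)))"
      by (intro sum_mono levy_tail_bound real_distribution_S \<open>r > 0\<close>)
    also have "\<dots> = r * integral {0..2 / r} (\<lambda>t. \<Sum>k<n. 1 - Re (char (S k) t))"
      by (simp add: sum_distrib_left integral_sum int)
    also have "\<dots> \<le> r * integral {0..2 / r} (\<lambda>t. C)"
      using \<open>r > 0\<close> C
      by (intro mult_left_mono integral_le integrable_sum int) (simp_all add: integrable_const_ivl)
    also have "\<dots> = 2 * C" using \<open>r > 0\<close> by simp
    finally show ?thesis .
  qed
  then show ?thesis
    by (intro summableI_nonneg_bounded[where x="2 * C"]) auto
qed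

end

lemma char_D_tendsto_1_near_0:
  obtains d where "d > 0" "\<And>t. \<bar>t\<bar> \<le> d \<Longrightarrow> (\<lambda>k. char (D k) t) \<longlonglongrightarrow> 1"
proof -
  obtain d where "d > 0" and d: "\<And>n t. \<bar>t\<bar> \<le> d \<Longrightarrow> 1 / 2 \<le> cmod (char (\<mu> n) t)"
    using char_\<mu>_bounded_below by blast
  have "(\<lambda>k. char (D k) t) \<longlonglongrightarrow> 1" if "\<bar>t\<bar> \<le> d" for t
  proof -
    have "1 / 2 \<le> cmod (char \<nu> t)"
      by (rule LIMSEQ_le_const[OF tendsto_norm[OF char_\<mu>_tendsto]]) (use d[OF that] in auto)
    then have nonzero: "char (\<mu> n) t \<noteq> 0" "char \<nu> t \<noteq> 0" for n
      using d[OF that, of n] by auto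
    have "(\<lambda>k. char (\<mu> (Suc k)) t / char (\<mu> k) t) \<longlonglongrightarrow> char \<nu> t / char \<nu> t"
      by (intro tendsto_divide nonzero char_\<mu>_tendsto LIMSEQ_Suc)
    moreover have "char (\<mu> (Suc k)) t / char (\<mu> k) t = char (D k) t" for k
      using nonzero(1)[of k] by (simp add: char_\<mu>)
    ultimately show ?thesis using nonzero(2) by simp
  qed
  with \<open>d > 0\<close> show thesis by (rule that)
qed

lemma one_minus_Re_char_D_tendsto_0: "(\<lambda>k. 1 - Re (char (D k) t)) \<longlonglongrightarrow> 0"
proof -
  obtain d where "d > 0" and d: "\<And>t. \<bar>t\<bar> \<le> d \<Longrightarrow> (\<lambda>k. char (D k) t) \<longlonglongrightarrow> 1"
    using char_D_tendsto_1_near_0 by blast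
  obtain m :: nat where m: "\<bar>t / 2 ^ m\<bar> \<le> d"
    using obtain_power_of_2_scaling[OF \<open>d > 0\<close>] .
  have "(\<lambda>k. 1 - Re (char (D k) (t / 2 ^ m))) \<longlonglongrightarrow> 1 - Re 1"
    by (intro tendsto_diff tendsto_const tendsto_Re d m)
  then have lim: "(\<lambda>k. 4 ^ m * (1 - Re (char (D k) (t / 2 ^ m)))) \<longlonglongrightarrow> 0"
    by (intro tendsto_mult_right_zero) simp
  have "norm (1 - Re (char (D k) t)) \<le> 4 ^ m * (1 - Re (char (D k) (t / 2 ^ m)))" for k
    using doubling_iterate[where f="\<lambda>t. 1 - Re (char (D k) t)",
        OF real_distribution.one_minus_Re_char_double_le[OF real_distribution_D]]
      real_distribution.one_minus_Re_char_bounds(1)[OF real_distribution_D, of k t]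
    by simp
  then have "\<forall>\<^sub>F k in sequentially.
      norm (1 - Re (char (D k) t)) \<le> 4 ^ m * (1 - Re (char (D k) (t / 2 ^ m)))"
    by simp
  from this lim show ?thesis
    by (rule Lim_null_comparison)
qed

theorem tail_D_tendsto_0:
  assumes "r > 0"
  shows "(\<lambda>k. measure (D k) {x. r \<le> \<bar>x\<bar>}) \<longlonglongrightarrow> 0"
proof -
  have "(\<lambda>k. integral {0..2 / r} (\<lambda>t. 1 - Re (char (D k) t))) \<longlonglongrightarrow> integral {0..2 / r} (\<lambda>t. 0)"
  proof (rule dominated_convergence(2)[where h="\<lambda>t. 2"])
    show "(\<lambda>t. 1 - Re (char (D k) t)) integrable_on {0..2 / r}" for k
      by (rule real_distribution.integrable_on_one_minus_Re_char[OF real_distribution_D])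
    show "norm (1 - Re (char (D k) t)) \<le> 2" for k t
      using real_distribution.one_minus_Re_char_bounds[OF real_distribution_D, of k t] by simp
    show "(\<lambda>t. 2) integrable_on {0..2 / r}"
      by (rule integrable_const_ivl)
    show "(\<lambda>k. 1 - Re (char (D k) t)) \<longlonglongrightarrow> 0" for t
      by (rule one_minus_Re_char_D_tendsto_0)
  qed
  then have lim: "(\<lambda>k. r * integral {0..2 / r} (\<lambda>t. 1 - Re (char (D k) t))) \<longlonglongrightarrow> 0"
    by (intro tendsto_mult_right_zero) simp
  have "\<forall>\<^sub>F k in sequentially.
      norm (measure (D k) {x. r \<le> \<bar>x\<bar>}) \<le> r * integral {0..2 / r} (\<lambda>t. 1 - Re (char (D k) t))"
    using levy_tail_bound[OF real_distribution_D \<open>r > 0\<close>] by simp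
  from this lim show ?thesis
    by (rule Lim_null_comparison)
qed

end

end

section \<open>Uniform distributions on finite sets\<close>

lemma measurable_uniform_count_measure: "f \<in> measurable (uniform_count_measure S) borel"
  by (simp add: measurable_def space_uniform_count_measure sets_uniform_count_measure)

lemma real_distribution_uniform_count_distr:
  assumes "finite S" "S \<noteq> {}"
  shows "real_distribution (distr (uniform_count_measure S) borel f)"
proof -
  interpret U: prob_space "uniform_count_measure S"
    using prob_space_uniform_count_measure[OF assms] .
  show ?thesis
    by (rule U.real_distribution_distr) (rule measurable_uniform_count_measure)
qed

lemma char_uniform_count_distr:
  assumes "finite S"
  shows "char (distr (uniform_count_measure S) borel f) t = (\<Sum>s\<in>S. iexp (t * f s)) / card S"
proof -
  have "char (distr (uniform_count_measure S) borel f) t = (CLINT s | uniform_count_measure S. iexp (t * f s))"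
    unfolding char_def
    by (subst integral_distr[OF measurable_uniform_count_measure]) auto
  also have "\<dots> = (\<Sum>s\<in>S. (1 / card S) *\<^sub>R iexp (t * f s))"
    using assms by (simp add: uniform_count_measure_def lebesgue_integral_point_measure_finite)
  also have "\<dots> = (\<Sum>s\<in>S. iexp (t * f s)) / card S"
    by (simp add: sum_divide_distrib scaleR_conv_of_real)
  finally show ?thesis .
qed

lemma measure_uniform_count_distr:
  assumes "finite S" "X \<in> sets borel"
  shows "measure (distr (uniform_count_measure S) borel f) X = card {s \<in> S. f s \<in> X} / card S"
proof -
  have "measure (distr (uniform_count_measure S) borel f) X = measure (uniform_count_measure S) {s \<in> S. f s \<in> X}"
    using assms
    by (subst measure_distr[OF measurable_uniform_count_measure])
       (auto simp: space_uniform_count_measure vimage_def Int_def conj_commute)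
  also have "\<dots> = card {s \<in> S. f s \<in> X} / card S"
    using assms by (subst measure_uniform_count_measure) auto
  finally show ?thesis .
qed

lemma real_distribution_delta_set: "finite A \<Longrightarrow> A \<noteq> {} \<Longrightarrow> real_distribution (delta_set A)"
  unfolding delta_set_def by (rule real_distribution_uniform_count_distr)

lemma char_delta_set: "finite A \<Longrightarrow> char (delta_set A) t = (\<Sum>a\<in>A. iexp (t * a)) / card A"
  unfolding delta_set_def by (rule char_uniform_count_distr)

lemma measure_delta_set:
  "finite A \<Longrightarrow> X \<in> sets borel \<Longrightarrow> measure (delta_set A) X = card {a \<in> A. a \<in> X} / card A"
  unfolding delta_set_def by (rule measure_uniform_count_distr)

lemma norm_one_minus_char_delta_set_le:
  assumes "finite A" "A \<noteq> {}" "0 \<le> c"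
  shows "cmod (1 - char (delta_set A) t) \<le> \<bar>t\<bar> * c + 2 * (card {a \<in> A. c < \<bar>a\<bar>} / card A)"
proof -
  have each: "cmod (1 - iexp (t * a)) \<le> \<bar>t\<bar> * c + (if c < \<bar>a\<bar> then 2 else 0)" for a
  proof (cases "c < \<bar>a\<bar>")
    case True
    have "cmod (1 - iexp (t * a)) \<le> 2"
      using norm_triangle_ineq4[of 1 "iexp (t * a)"] by (simp add: norm_exp_i_times)
    moreover have "0 \<le> \<bar>t\<bar> * c" using \<open>0 \<le> c\<close> by simp
    ultimately show ?thesis using True by simp
  next
    case False
    have "cmod (1 - iexp (t * a)) \<le> \<bar>t * a\<bar>"
      using iexp_approx1[of "t * a" 0] by (simp add: norm_minus_commute)
    also have "\<dots> \<le> \<bar>t\<bar> * c"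
      using False by (simp add: abs_mult mult_left_mono)
    finally show ?thesis using False by simp
  qed
  have "1 - char (delta_set A) t = (\<Sum>a\<in>A. 1 - iexp (t * a)) / card A"
    using assms by (simp add: char_delta_set sum_subtractf diff_divide_distrib)
  then have "cmod (1 - char (delta_set A) t) \<le> (\<Sum>a\<in>A. cmod (1 - iexp (t * a))) / card A"
    by (simp add: norm_divide divide_right_mono norm_sum)
  also have "\<dots> \<le> (\<Sum>a\<in>A. \<bar>t\<bar> * c + (if c < \<bar>a\<bar> then 2 else 0)) / card A"
    by (intro divide_right_mono sum_mono each) simp
  also have "\<dots> = \<bar>t\<bar> * c + 2 * (card {a \<in> A. c < \<bar>a\<bar>} / card A)"
    using assms by (simp add: sum.distrib sum.If_cases Int_def add_divide_distrib)
  finally show ?thesis .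
qed

definition sym_delta_set :: "real set \<Rightarrow> real measure" where
  "sym_delta_set A = distr (uniform_count_measure (A \<times> A)) borel (\<lambda>(a, b). a - b)"

lemma real_distribution_sym_delta_set: "finite A \<Longrightarrow> A \<noteq> {} \<Longrightarrow> real_distribution (sym_delta_set A)"
  unfolding sym_delta_set_def by (rule real_distribution_uniform_count_distr) auto

lemma char_sym_delta_set:
  assumes "finite A"
  shows "char (sym_delta_set A) t = of_real (cmod (char (delta_set A) t) ^ 2)"
proof -
  have "of_real (cmod (char (delta_set A) t) ^ 2) = char (delta_set A) t * cnj (char (delta_set A) t)"
    by (rule complex_norm_square)
  also have "\<dots> = (\<Sum>a\<in>A. iexp (t * a)) * (\<Sum>b\<in>A. iexp (- (t * b))) / card A ^ 2"
    using assms unfolding delta_set_def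
    by (simp add: char_uniform_count_distr exp_cnj power2_eq_square)
  also have "\<dots> = (\<Sum>p\<in>A \<times> A. iexp (t * (fst p - snd p))) / card (A \<times> A)"
    by (simp add: sum_product sum.cartesian_product case_prod_beta card_cartesian_product
          power2_eq_square exp_add[symmetric] algebra_simps)
  also have "\<dots> = char (sym_delta_set A) t"
    using assms unfolding sym_delta_set_def by (simp add: char_uniform_count_distr case_prod_beta)
  finally show ?thesis ..
qed

lemma measure_sym_delta_set:
  "finite A \<Longrightarrow> X \<in> sets borel \<Longrightarrow>
    measure (sym_delta_set A) X = card {p \<in> A \<times> A. fst p - snd p \<in> X} / card A ^ 2"
  unfolding sym_delta_set_def
  by (subst measure_uniform_count_distr) (auto simp: case_prod_beta card_cartesian_product power2_eq_square)

lemma tail_delta_set_le_sym_delta_set: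
  assumes "finite A" "A \<noteq> {}" and small: "measure (delta_set A) {x. r / 2 \<le> \<bar>x\<bar>} \<le> 1 / 2"
  shows "measure (delta_set A) {x. r < \<bar>x\<bar>} \<le> 2 * measure (sym_delta_set A) {x. r / 2 \<le> \<bar>x\<bar>}"
proof -
  define far where "far = {a \<in> A. r < \<bar>a\<bar>}"
  define near where "near = {a \<in> A. \<bar>a\<bar> < r / 2}"
  define pairs where "pairs = {p \<in> A \<times> A. r / 2 \<le> \<bar>fst p - snd p\<bar>}"
  have n: "real (card A) > 0" using assms by (simp add: card_gt_0_iff)
  have "card {a \<in> A. r / 2 \<le> \<bar>a\<bar>} \<le> card A / 2"
    using small n by (simp add: measure_delta_set assms field_simps)
  moreover have "card near + card {a \<in> A. r / 2 \<le> \<bar>a\<bar>} = card A"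
    unfolding near_def using \<open>finite A\<close>
    by (subst card_Un_disjoint[symmetric]) (auto intro!: arg_cong[where f=card])
  ultimately have near: "card A / 2 \<le> card near" by linarith
  have "far \<times> near \<subseteq> pairs"
    by (auto simp: far_def near_def pairs_def) (smt (verit) abs_triangle_ineq4)
  then have "card far * card near \<le> card pairs"
    unfolding card_cartesian_product[symmetric] pairs_def
    using \<open>finite A\<close> by (intro card_mono) auto
  moreover have "card far * (card A / 2) \<le> real (card far) * card near"
    using near by (intro mult_left_mono) simp_all
  ultimately have "card far * (card A / 2) \<le> card pairs"
    by (metis of_nat_le_iff of_nat_mult order_trans)
  then show ?thesis
    using n assms
    by (simp add: measure_delta_set measure_sym_delta_set far_def pairs_def field_simps power2_eq_square)
qed

section \<open>The infinite convolution of digit sets\<close>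

lemma prodN_Suc: "prodN N (Suc n) = prodN N n * N (Suc n)"
  unfolding prodN_def by (simp add: prod.nat_ivl_Suc')

lemma card_scaled: "(P::real) \<noteq> 0 \<Longrightarrow> card ((\<lambda>b. b / P) ` B) = card B"
  by (intro card_image inj_onI) auto

lemma card_scaled_tail:
  fixes P c :: real
  assumes "P > 0"
  shows "card {a \<in> (\<lambda>b. b / P) ` B. c < \<bar>a\<bar>} = card {b \<in> B. P * c < \<bar>b\<bar>}"
proof -
  have "{a \<in> (\<lambda>b. b / P) ` B. c < \<bar>a\<bar>} = (\<lambda>b. b / P) ` {b \<in> B. P * c < \<bar>b\<bar>}"
    using assms by (auto simp: abs_divide pos_less_divide_eq mult.commute)
  then show ?thesis
    using assms by (simp add: card_scaled)
qed

locale digit_system =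
  fixes N :: "nat \<Rightarrow> nat" and B :: "nat \<Rightarrow> real set"
  assumes N_pos: "\<And>n. n \<ge> 1 \<Longrightarrow> N n > 0"
    and B_finite_card_ge_2: "\<And>n. n \<ge> 1 \<Longrightarrow> finite (B n) \<and> card (B n) \<ge> 2"
begin

text \<open>Index \<open>k\<close> of \<open>digits\<close> is index \<open>k + 1\<close> of the paper, matching \<open>mu_seq\<close>:
  \<open>mu_seq N B n\<close> is the convolution of \<open>delta_set (digits k)\<close> for \<open>k < n\<close>.\<close>

definition digits :: "nat \<Rightarrow> real set" where
  "digits k = (\<lambda>b. b / prodN N (Suc k)) ` B (Suc k)"

lemma prodN_pos: "prodN N n > 0"
  unfolding prodN_def using N_pos by (intro prod_pos) auto

lemma finite_digits: "finite (digits k)"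
  using B_finite_card_ge_2[of "Suc k"] by (simp add: digits_def)

lemma card_digits: "card (digits k) = card (B (Suc k))"
  using prodN_pos[of "Suc k"] by (simp add: digits_def card_scaled)

lemma digits_nonempty: "digits k \<noteq> {}"
  using B_finite_card_ge_2[of "Suc k"] card_digits[of k] by auto

sublocale partial_convolutions "\<lambda>k. delta_set (digits k)" "mu_seq N B"
  by (intro partial_convolutions.intro real_distribution_delta_set finite_digits digits_nonempty)
     (simp_all add: digits_def)

lemma card_digits_tail: "card {a \<in> digits k. c < \<bar>a\<bar>} = card {b \<in> B (Suc k). prodN N (Suc k) * c < \<bar>b\<bar>}"
  unfolding digits_def by (rule card_scaled_tail[OF prodN_pos])

lemma summable_inverse_prodN:
  assumes "eventually (\<lambda>k. 2 \<le> N (Suc k)) sequentially"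
  shows "summable (\<lambda>k. 1 / prodN N k)"
proof -
  obtain K where K: "\<And>k. k \<ge> K \<Longrightarrow> 2 \<le> N (Suc k)"
    using assms unfolding eventually_sequentially by blast
  show ?thesis
  proof (rule summable_ratio_test[where c="1 / 2" and N=K])
    fix k assume "k \<ge> K"
    have "1 / prodN N (Suc k) = (1 / prodN N k) * (1 / N (Suc k))"
      by (simp add: prodN_Suc)
    also have "\<dots> \<le> (1 / prodN N k) * (1 / 2)"
      using K[OF \<open>k \<ge> K\<close>] prodN_pos[of k] by (intro mult_left_mono) (auto simp: field_simps)
    finally show "norm (1 / prodN N (Suc k)) \<le> 1 / 2 * norm (1 / prodN N k)"
      using prodN_pos[of k] prodN_pos[of "Suc k"] by simp
  qed simp
qed

lemma two_le_N_if_few_large_digits: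
  assumes "n \<ge> 1" "2 * card (Bn2 N B n) < card (B n)"
  shows "2 \<le> N n"
proof (rule ccontr)
  assume "\<not> 2 \<le> N n"
  then have "N n = 1" using N_pos[OF \<open>n \<ge> 1\<close>] by linarith
  then have "Bn1 N B n \<subseteq> {0}" unfolding Bn1_def by auto
  then have "card (Bn1 N B n) \<le> 1"
    using card_mono[of "{0}" "Bn1 N B n"] by simp
  moreover have "card (Bn2 N B n) = card (B n) - card (Bn1 N B n)"
    unfolding Bn2_def using B_finite_card_ge_2[OF \<open>n \<ge> 1\<close>] by (intro card_Diff_subset) (auto simp: Bn1_def)
  ultimately show False
    using assms(2) B_finite_card_ge_2[OF \<open>n \<ge> 1\<close>] by linarith
qed

theorem inf_conv_exists_if_tails_summable:
  assumes "summable c" "\<And>k. 0 \<le> c k"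
    and tails: "summable (\<lambda>k. card {b \<in> B (Suc k). prodN N (Suc k) * c k < \<bar>b\<bar>} / card (B (Suc k)))"
  shows "inf_conv_exists N B"
  unfolding inf_conv_exists_def
proof (rule weak_conv_if_char_deviation_summable[OF \<open>summable c\<close> summable_mult[OF tails]])
  show "cmod (1 - char (delta_set (digits k)) t)
    \<le> \<bar>t\<bar> * c k + 2 * (card {b \<in> B (Suc k). prodN N (Suc k) * c k < \<bar>b\<bar>} / card (B (Suc k)))" for k t
    using norm_one_minus_char_delta_set_le[OF finite_digits digits_nonempty \<open>0 \<le> c k\<close>]
    by (simp add: card_digits_tail card_digits)
qed (simp_all add: assms)

theorem inf_conv_exists_if_summable_Max:
  assumes "summable (\<lambda>k. Max (abs ` B (Suc k)) / prodN N (Suc k))"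
  shows "inf_conv_exists N B"
proof (rule inf_conv_exists_if_tails_summable[OF assms])
  fix k
  have fin: "finite (abs ` B (Suc k))" and ne: "abs ` B (Suc k) \<noteq> {}"
    using B_finite_card_ge_2[of "Suc k"] by auto
  then have "0 \<le> Max (abs ` B (Suc k))"
    using Max_in[OF fin ne] by (metis abs_ge_zero imageE)
  then show "0 \<le> Max (abs ` B (Suc k)) / prodN N (Suc k)"
    using prodN_pos[of "Suc k"] by simp
next
  have empty: "{b \<in> B (Suc k). prodN N (Suc k) * (Max (abs ` B (Suc k)) / prodN N (Suc k)) < \<bar>b\<bar>} = {}" for k
    using prodN_pos[of "Suc k"] B_finite_card_ge_2[of "Suc k"] by (auto simp: not_less)
  show "summable (\<lambda>k. card {b \<in> B (Suc k). prodN N (Suc k) * (Max (abs ` B (Suc k)) / prodN N (Suc k)) < \<bar>b\<bar>}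
      / card (B (Suc k)))"
    unfolding empty by simp
qed

theorem inf_conv_exists_if_summable_Bn2:
  assumes summable: "summable (\<lambda>k. card (Bn2 N B (Suc k)) / card (B (Suc k)))"
  shows "inf_conv_exists N B"
proof (rule inf_conv_exists_if_tails_summable[where c="\<lambda>k. 1 / prodN N k"])
  have "eventually (\<lambda>k. card (Bn2 N B (Suc k)) / card (B (Suc k)) < 1 / 2) sequentially"
    using order_tendstoD(2)[OF summable_LIMSEQ_zero[OF summable], of "1 / 2"] by simp
  then have "eventually (\<lambda>k. 2 \<le> N (Suc k)) sequentially"
  proof (rule eventually_mono)
    fix k assume "card (Bn2 N B (Suc k)) / card (B (Suc k)) < 1 / 2"
    then have "2 * card (Bn2 N B (Suc k)) < card (B (Suc k))"
      using B_finite_card_ge_2[of "Suc k"] by (simp add: divide_less_eq)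
    then show "2 \<le> N (Suc k)"
      by (intro two_le_N_if_few_large_digits) simp_all
  qed
  then show "summable (\<lambda>k. 1 / prodN N k)"
    by (rule summable_inverse_prodN)
  show "0 \<le> 1 / prodN N k" for k
    using prodN_pos[of k] by simp
  have "{b \<in> B (Suc k). prodN N (Suc k) * (1 / prodN N k) < \<bar>b\<bar>} \<subseteq> Bn2 N B (Suc k)" for k
    using prodN_pos[of k] by (auto simp: prodN_Suc Bn2_def Bn1_def)
  then have "card {b \<in> B (Suc k). prodN N (Suc k) * (1 / prodN N k) < \<bar>b\<bar>} \<le> card (Bn2 N B (Suc k))" for k
    using B_finite_card_ge_2[of "Suc k"] by (intro card_mono) (auto simp: Bn2_def)
  then show "summable (\<lambda>k. card {b \<in> B (Suc k). prodN N (Suc k) * (1 / prodN N k) < \<bar>b\<bar>} / card (B (Suc k)))"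
    by (intro summable_comparison_test'[OF summable]) (simp add: divide_right_mono)
qed

theorem summable_tails_if_inf_conv_exists:
  assumes "inf_conv_exists N B" "r > 0"
  shows "summable (\<lambda>k. card {b \<in> B (Suc k). prodN N (Suc k) * r < \<bar>b\<bar>} / card (B (Suc k)))"
proof -
  obtain \<nu> where \<nu>: "real_distribution \<nu>" "weak_conv_m (mu_seq N B) \<nu>"
    using assms(1) unfolding inf_conv_exists_def by blast
  have sym: "summable (\<lambda>k. measure (sym_delta_set (digits k)) {x. r / 2 \<le> \<bar>x\<bar>})"
    using \<open>r > 0\<close>
    by (intro summable_tail_symmetrisation[OF \<nu>] real_distribution_sym_delta_set char_sym_delta_set
          finite_digits digits_nonempty) simp_all
  have "(\<lambda>k. measure (delta_set (digits k)) {x. r / 2 \<le> \<bar>x\<bar>}) \<longlonglongrightarrow> 0"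
    using \<open>r > 0\<close> by (intro tail_D_tendsto_0[OF \<nu>]) simp
  then have "eventually (\<lambda>k. measure (delta_set (digits k)) {x. r / 2 \<le> \<bar>x\<bar>} < 1 / 2) sequentially"
    by (rule order_tendstoD) simp
  then have "eventually (\<lambda>k. norm (card {b \<in> B (Suc k). prodN N (Suc k) * r < \<bar>b\<bar>} / card (B (Suc k)))
      \<le> 2 * measure (sym_delta_set (digits k)) {x. r / 2 \<le> \<bar>x\<bar>}) sequentially"
  proof (rule eventually_mono)
    fix k assume "measure (delta_set (digits k)) {x. r / 2 \<le> \<bar>x\<bar>} < 1 / 2"
    then have "measure (delta_set (digits k)) {x. r < \<bar>x\<bar>}
        \<le> 2 * measure (sym_delta_set (digits k)) {x. r / 2 \<le> \<bar>x\<bar>}"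
      by (intro tail_delta_set_le_sym_delta_set finite_digits digits_nonempty) simp
    then show "norm (card {b \<in> B (Suc k). prodN N (Suc k) * r < \<bar>b\<bar>} / card (B (Suc k)))
        \<le> 2 * measure (sym_delta_set (digits k)) {x. r / 2 \<le> \<bar>x\<bar>}"
      by (simp add: measure_delta_set finite_digits card_digits_tail card_digits)
  qed
  from this summable_mult[OF sym] show ?thesis
    by (rule summable_comparison_test_ev)
qed

end

theorem theorem2p1:
  fixes N :: "nat \<Rightarrow> nat" and B :: "nat \<Rightarrow> real set"
  assumes hN: "\<And>n. n \<ge> 1 \<Longrightarrow> N n > 0"
      and hB: "\<And>n. n \<ge> 1 \<Longrightarrow> finite (B n) \<and> card (B n) \<ge> 2"
  shows "((summable (\<lambda>n. real (card (Bn2 N B (Suc n))) / real (card (B (Suc n))))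
          \<or> summable (\<lambda>n. Max (abs ` B (Suc n)) / prodN N (Suc n)))
          \<longrightarrow> inf_conv_exists N B)
       \<and> ((\<exists>r0>0. \<not> summable (\<lambda>n. real (card {b \<in> B (Suc n). \<bar>b\<bar> > prodN N (Suc n) * r0})
                                     / real (card (B (Suc n)))))
          \<longrightarrow> \<not> inf_conv_exists N B)"
proof -
  interpret digit_system N B
    using hN hB by unfold_locales
  show ?thesis
  proof (intro conjI impI)
    assume "summable (\<lambda>n. real (card (Bn2 N B (Suc n))) / real (card (B (Suc n))))
      \<or> summable (\<lambda>n. Max (abs ` B (Suc n)) / prodN N (Suc n))"
    then show "inf_conv_exists N B"
      using inf_conv_exists_if_summable_Bn2 inf_conv_exists_if_summable_Max by blast
  next
    assume "\<exists>r0>0. \<not> summable (\<lambda>n. real (card {b \<in> B (Suc n). \<bar>b\<bar> > prodN N (Suc n) * r0})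
      / real (card (B (Suc n))))"
    then show "\<not> inf_conv_exists N B"
      using summable_tails_if_inf_conv_exists by blast
  qed
qed

end
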